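(* Let $\mathcal{V}$ be the list of vectors produced by the first reduction (described in the context) from an instance of the (3,2-2) Set Splitting Problem with variables $x(1),\dots,x(n)$ and sets $S_1,\dots,S_m$. Let $z(i,h) \in \{\pm1\}$ for $1 \le i \le n$, $1 \le h \le 4$, and $w(j,h) \in \{\pm 1\}$ for $j \in B$, $1 \le h \le 3$. If there are $k$ indices $i$ for which $z(i,h)$ is not constant in $h$, then the matrix $M(\mathcal{V}, z, w)$ has at least $k$ diagonal entries, in rows/columns indexed by $B$, of absolute value at least $1/50$.
   Context: An instance of the (3,2-2) Set Splitting Problem consists of $\pm1$ variables $x(1),\dots,x(n)$ and sets $S_1,\dots,S_m \subseteq \{1,\dots,n\}$ each of size exactly 4, with each variable in at most 3 sets; $x$ satisfies $S_j$ if $\sum_{i\in S_j} x(i) = 0$. Let $q_1 = \tfrac15 (1,4,-2,-2)^T$, $q_2 = \tfrac15(4,1,2,2)^T$, $q_3 = \tfrac15(-2,2,-1,4)^T$, $q_4 = \tfrac15(-2,2,4,-1)^T$ (an orthonormal basis of $\mathbb{R}^4$). The first reduction: for each $i$ let $A_i = \{ j : i \in S_j\}$; if $|A_i| = t$ (so $t\le 3$), introduce a set $B_i$ of $4 - t$ new coordinates (so $B_i \neq \emptyset$). Let $A = \{1,\dots,m\}$, $B = \bigcup_i B_i$ (disjoint union of new coordinates), and work in $\mathbb{R}^{A \cup B}$. Let $T_i = A_i \cup B_i$ (a set of 4 coordinates) and fix a bijection of $T_i$ with $\{1,2,3,4\}$. For $1\le h\le 4$, $q_{i,h}$ is the vector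 that is zero outside $T_i$ and equals $\tfrac12 q_h$ on $T_i$ (via the bijection). For each $j \in B$ and $1 \le h \le 3$ let $r_{j,h} = \tfrac12 e_j$. $\mathcal{V}$ is the list of all $q_{i,h}$ and $r_{j,h}$. For signs $z(i,h)$, $w(j,h)$, set $M(\mathcal{V}, z, w) = \sum_{i,h} z(i,h) q_{i,h} q_{i,h}^T + \sum_{j \in B, h} w(j,h) r_{j,h} r_{j,h}^T$. *)

theory Defs
  imports Main "HOL.Real"
begin

text \<open>The orthonormal basis q_1..q_4 of R^4 (indices h, p in 1..4): qbase h p = (q_h)_p.\<close>
definition qbase :: "nat \<Rightarrow> nat \<Rightarrow> real" where
  "qbase h p = (if h = 1 then [1, 4, -2, -2] ! (p - 1)
               else if h = 2 then [4, 1, 2, 2] ! (p - 1)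
               else if h = 3 then [-2, 2, -1, 4] ! (p - 1)
               else [-2, 2, 4, -1] ! (p - 1)) / 5"

definition ssp_instance :: "nat \<Rightarrow> nat \<Rightarrow> (nat \<Rightarrow> nat set) \<Rightarrow> bool" where
  "ssp_instance n m S \<longleftrightarrow>
     (\<forall>j\<in>{1..m}. S j \<subseteq> {1..n} \<and> card (S j) = 4) \<and>
     (\<forall>i\<in>{1..n}. card {j\<in>{1..m}. i \<in> S j} \<le> 3)"

text \<open>Coordinates: Inl j for j in A = {1..m}; Inr (i,l) are the new coordinates of B_i.\<close>
type_synonym coord = "nat + nat \<times> nat"

definition Aset :: "nat \<Rightarrow> (nat \<Rightarrow> nat set) \<Rightarrow> nat \<Rightarrow> nat set" where
  "Aset m S i = {j\<in>{1..m}. i \<in> S j}"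

definition Bset :: "nat \<Rightarrow> (nat \<Rightarrow> nat set) \<Rightarrow> nat \<Rightarrow> coord set" where
  "Bset m S i = {Inr (i, l) | l. l < 4 - card (Aset m S i)}"

definition Bcoords :: "nat \<Rightarrow> nat \<Rightarrow> (nat \<Rightarrow> nat set) \<Rightarrow> coord set" where
  "Bcoords n m S = (\<Union>i\<in>{1..n}. Bset m S i)"

definition Tset :: "nat \<Rightarrow> (nat \<Rightarrow> nat set) \<Rightarrow> nat \<Rightarrow> coord set" where
  "Tset m S i = Inl ` Aset m S i \<union> Bset m S i"

definition qvec :: "nat \<Rightarrow> (nat \<Rightarrow> nat set) \<Rightarrow> (nat \<Rightarrow> coord \<Rightarrow> nat) \<Rightarrow> nat \<Rightarrow> nat \<Rightarrow> coord \<Rightarrow> real" where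
  "qvec m S \<sigma> i h c = (if c \<in> Tset m S i then qbase h (\<sigma> i c) / 2 else 0)"

definition rvec :: "coord \<Rightarrow> coord \<Rightarrow> real" where
  "rvec j c = (if c = j then 1 / 2 else 0)"

definition Mmat :: "nat \<Rightarrow> nat \<Rightarrow> (nat \<Rightarrow> nat set) \<Rightarrow> (nat \<Rightarrow> coord \<Rightarrow> nat)
    \<Rightarrow> (nat \<Rightarrow> nat \<Rightarrow> real) \<Rightarrow> (coord \<Rightarrow> nat \<Rightarrow> real) \<Rightarrow> coord \<Rightarrow> coord \<Rightarrow> real" where
  "Mmat n m S \<sigma> z w c d =
     (\<Sum>i\<in>{1..n}. \<Sum>h\<in>{1..4}. z i h * qvec m S \<sigma> i h c * qvec m S \<sigma> i h d)
   + (\<Sum>j\<in>Bcoords n m S. \<Sum>h\<in>{1..3}. w j h * rvec j c * rvec j d)"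

end

theory Submission
  imports Defs
begin

(* For j in B_i the only vectors of the list that are nonzero at j are q_{i,h} and r_{j,h}, so
   with p = sigma_i(j) we get 100 M_jj = sum_h z(i,h) (5 q_h)_p^2 + 25 sum_h w(j,h). The squares
   (5 q_h)_p^2 are a permutation of 1, 16, 4, 4, which makes this integer a nonzero even number
   whenever z(i,-) is not constant. As i lies in at most three sets, B_i is nonempty, so each such
   i contributes its own coordinate of B. *)

(* The numerator is even and nonzero: a + 16b + 4c + 4d is odd of modulus < 25 unless
   a = b = c = d, whereas 25(e + f + g) is an odd multiple of 25. *)
lemma sign_combination_abs_ge:
  fixes a b c d e f g :: real
  assumes "a \<in> {-1,1}" "b \<in> {-1,1}" "c \<in> {-1,1}" "d \<in> {-1,1}"
    and "e \<in> {-1,1}" "f \<in> {-1,1}" "g \<in> {-1,1}"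
    and "\<not> (a = b \<and> b = c \<and> c = d)"
  shows "1/50 \<le> \<bar>(a + 16 * b + 4 * c + 4 * d + 25 * (e + f + g)) / 100\<bar>"
  using assms by auto

lemma qbase_column_signed_sum_abs_ge:
  fixes z w :: "nat \<Rightarrow> real"
  assumes z: "\<forall>h\<in>{1..4}. z h \<in> {-1,1}" and w: "\<forall>h\<in>{1..3}. w h \<in> {-1,1}"
    and nonconst: "h \<in> {1..4}" "h' \<in> {1..4}" "z h \<noteq> z h'"
    and p: "p \<in> {1..4}"
  shows "1/50 \<le> \<bar>(\<Sum>h\<in>{1..4}. z h * (qbase h p / 2)^2) + (\<Sum>h\<in>{1..3}. w h) / 4\<bar>"
proof -
  have four: "{1..4::nat} = {1,2,3,4}" and three: "{1..3::nat} = {1,2,3}" by auto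
  have signs: "z 1 \<in> {-1,1}" "z 2 \<in> {-1,1}" "z 3 \<in> {-1,1}" "z 4 \<in> {-1,1}"
      "w 1 \<in> {-1,1}" "w 2 \<in> {-1,1}" "w 3 \<in> {-1,1}"
    using z w by auto
  have nonconst': "\<not> (z 1 = z 2 \<and> z 2 = z 3 \<and> z 3 = z 4)"
    using nonconst unfolding four by auto
  let ?e = "\<lambda>a b c d. (a + 16 * b + 4 * c + 4 * d + 25 * (w 1 + w 2 + w 3)) / 100"
  from p consider "p = 1" | "p = 2" | "p = 3" | "p = 4" by fastforce
  then have "(\<Sum>h\<in>{1..4}. z h * (qbase h p / 2)^2) + (\<Sum>h\<in>{1..3}. w h) / 4
      \<in> {?e (z 1) (z 2) (z 3) (z 4), ?e (z 2) (z 1) (z 3) (z 4),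
         ?e (z 3) (z 4) (z 1) (z 2), ?e (z 4) (z 3) (z 1) (z 2)}"
    unfolding four three by cases (simp_all add: qbase_def power2_eq_square field_simps)
  moreover have "1/50 \<le> \<bar>?e (z 1) (z 2) (z 3) (z 4)\<bar>" "1/50 \<le> \<bar>?e (z 2) (z 1) (z 3) (z 4)\<bar>"
      "1/50 \<le> \<bar>?e (z 3) (z 4) (z 1) (z 2)\<bar>" "1/50 \<le> \<bar>?e (z 4) (z 3) (z 1) (z 2)\<bar>"
    by (rule sign_combination_abs_ge; use signs nonconst' in auto)+
  ultimately show ?thesis by (elim insertE emptyE) (simp_all only:)
qed

lemma finite_Bset: "finite (Bset m S i)"
proof -
  have "Bset m S i \<subseteq> (\<lambda>l. Inr (i, l)) ` {..<4}"
    unfolding Bset_def by auto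
  then show ?thesis by (rule finite_subset) simp
qed

lemma finite_Bcoords: "finite (Bcoords n m S)"
  unfolding Bcoords_def by (simp add: finite_Bset)

lemma Inr_0_in_Bset:
  assumes "ssp_instance n m S" and "i \<in> {1..n}"
  shows "Inr (i, 0) \<in> Bset m S i"
proof -
  have "card (Aset m S i) \<le> 3"
    using assms unfolding ssp_instance_def Aset_def by auto
  then show ?thesis unfolding Bset_def by auto
qed

lemma Bset_subset_Bcoords: "i \<in> {1..n} \<Longrightarrow> Bset m S i \<subseteq> Bcoords n m S"
  unfolding Bcoords_def by blast

lemma Inr_in_Tset_iff: "Inr (i, l) \<in> Tset m S i' \<longleftrightarrow> i' = i \<and> Inr (i, l) \<in> Bset m S i"
  unfolding Tset_def Bset_def by auto

lemma Mmat_diag_Bset: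
  assumes i: "i \<in> {1..n}" and j: "j \<in> Bset m S i"
  shows "Mmat n m S \<sigma> z w j j
    = (\<Sum>h\<in>{1..4}. z i h * (qbase h (\<sigma> i j) / 2)^2) + (\<Sum>h\<in>{1..3}. w j h) / 4"
proof -
  obtain l where l: "j = Inr (i, l)"
    using j unfolding Bset_def by blast
  have qvec_j: "qvec m S \<sigma> i' h j = (if i' = i then qbase h (\<sigma> i j) / 2 else 0)" for i' h
    using j Inr_in_Tset_iff unfolding qvec_def l by auto
  have "(\<Sum>h\<in>{1..4}. z i' h * qvec m S \<sigma> i' h j * qvec m S \<sigma> i' h j)
      = (if i' = i then \<Sum>h\<in>{1..4}. z i h * (qbase h (\<sigma> i j) / 2)^2 else 0)" for i'
    by (simp add: qvec_j power2_eq_square mult.assoc)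
  moreover have "(\<Sum>h\<in>{1..3}. w j' h * rvec j' j * rvec j' j)
      = (if j' = j then (\<Sum>h\<in>{1..3}. w j h) / 4 else 0)" for j'
    by (simp add: rvec_def sum_divide_distrib)
  moreover have "j \<in> Bcoords n m S"
    using i j Bset_subset_Bcoords by blast
  ultimately show ?thesis
    unfolding Mmat_def using i by (simp add: finite_Bcoords)
qed

theorem lemma8:
  fixes n m k :: nat and S :: "nat \<Rightarrow> nat set" and \<sigma> :: "nat \<Rightarrow> coord \<Rightarrow> nat"
    and z :: "nat \<Rightarrow> nat \<Rightarrow> real" and w :: "coord \<Rightarrow> nat \<Rightarrow> real"
  assumes inst: "ssp_instance n m S"
    and bij: "\<forall>i\<in>{1..n}. bij_betw (\<sigma> i) (Tset m S i) {1..4}"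
    and zsign: "\<forall>i\<in>{1..n}. \<forall>h\<in>{1..4}. z i h \<in> {-1, 1}"
    and wsign: "\<forall>j\<in>Bcoords n m S. \<forall>h\<in>{1..3}. w j h \<in> {-1, 1}"
    and kdef: "k = card {i\<in>{1..n}. \<exists>h\<in>{1..4}. \<exists>h'\<in>{1..4}. z i h \<noteq> z i h'}"
  shows "k \<le> card {j\<in>Bcoords n m S. \<bar>Mmat n m S \<sigma> z w j j\<bar> \<ge> 1 / 50}"
proof -
  let ?K = "{i\<in>{1..n}. \<exists>h\<in>{1..4}. \<exists>h'\<in>{1..4}. z i h \<noteq> z i h'}"
  let ?j = "\<lambda>i. Inr (i, 0) :: coord"
  have "?j i \<in> {j\<in>Bcoords n m S. \<bar>Mmat n m S \<sigma> z w j j\<bar> \<ge> 1 / 50}" if "i \<in> ?K" for i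
  proof -
    obtain h h' where i: "i \<in> {1..n}" and h: "h \<in> {1..4}" "h' \<in> {1..4}" "z i h \<noteq> z i h'"
      using \<open>i \<in> ?K\<close> by blast
    have iB: "?j i \<in> Bset m S i" and iBc: "?j i \<in> Bcoords n m S"
      using Inr_0_in_Bset[OF inst i] Bset_subset_Bcoords[OF i] by blast+
    have "\<sigma> i (?j i) \<in> {1..4}"
      using bij i iB bij_betw_apply unfolding Tset_def by fastforce
    then have "1/50 \<le> \<bar>Mmat n m S \<sigma> z w (?j i) (?j i)\<bar>"
      unfolding Mmat_diag_Bset[OF i iB]
      using zsign wsign i iBc by (intro qbase_column_signed_sum_abs_ge[OF _ _ h]) auto
    with iBc show ?thesis by simp
  qed
  then have "?j ` ?K \<subseteq> {j\<in>Bcoords n m S. \<bar>Mmat n m S \<sigma> z w j j\<bar> \<ge> 1 / 50}" by blast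
  then show ?thesis
    unfolding kdef by (rule card_inj_on_le[rotated]) (simp_all add: inj_on_def finite_Bcoords)
qed
end
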